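(* Let $\mathfrak{A}[\tau]$ be a semi-associative topological partial *-algebra with multiplication core $\mathfrak{B}$. Then $\mathfrak{A}^+(\mathfrak{B})\subseteq\mathfrak{A}^+_{\rm top}\subseteq\mathfrak{A}^+_{\mathcal{M}}$ for every $\mathcal{M}\subseteq\mathcal{P}_{\mathfrak{B}}(\mathfrak{A})$.
   Context: A partial *-algebra is a complex vector space $\mathfrak{A}$ with conjugate-linear involution and distributive partial multiplication on $\Gamma\subset\mathfrak{A}\times\mathfrak{A}$ with $(x,y)\in\Gamma$ iff $(y^*,x^* )\in\Gamma$, then $(xy)^*=y^*x^*$; $L(y)=\{x:(x,y)\in\Gamma\}$, $R(x)=\{y:(x,y)\in\Gamma\}$; $R\mathfrak{A}$ is the set of universal right multipliers. Semi-associative: $y\in R(x)$ implies $yz\in R(x)$ and $(xy)z=x(yz)$ for all $z\in R\mathfrak{A}$. A topological partial *-algebra: Hausdorff locally convex topology $\tau$ such that each map $y\in R(x)\mapsto xy$ is closed. $\tau^*$ is given by seminorms $\max\{p(x),p(x^* )\}$. A multiplication core is a subspace $\mathfrak{B}\subseteq R\mathfrak{A}$ with: $e\in\mathfrak{B}$ if a unit $e$ exists; $\mathfrak{B}\mathfrak{B}\subseteq\mathfrak{B}$; $\mathfrak{B}$ $\tau^*$-dense; $x\mapsto xb$ $\tau$-continuous for $b\in\mathfrak{B}$; $b^*(xc)=(b^*x)c$. An ips-form with core $\mathfrak{B}$ is a positive sesquilinear form $\varphi$ on $\mathfrak{A}\times\mathfrak{A}$ with $\mathfrak{B}\subset R\mathfrak{A}$,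 $\{x+N_\varphi:x\in\mathfrak{B}\}$ dense in the completion of $\mathfrak{A}/N_\varphi$ ($N_\varphi=\{x:\varphi(x,x)=0\}$), $\varphi(xa,b)=\varphi(a,x^*b)$ ($x\in\mathfrak{A}$, $a,b\in\mathfrak{B}$) and $\varphi(x^*a,yb)=\varphi(a,(xy)b)$ ($x\in L(y)$, $a,b\in\mathfrak{B}$). $\mathcal{P}_{\mathfrak{B}}(\mathfrak{A})$ is the set of ips-forms with core $\mathfrak{B}$ that are $\tau$-continuous ($|\varphi(x,y)|\le p(x)p(y)$ for a continuous seminorm $p$). $\mathfrak{A}^+(\mathfrak{B})$ is the $\tau$-closure of $\{\sum_{k=1}^n x_k^*x_k:x_k\in\mathfrak{B},n\in\mathbb{N}\}$; $\mathfrak{A}^+_{\rm top}$ is the $\tau$-closure of $\{\sum_{k=1}^n x_k^*x_k:x_k\in R\mathfrak{A},n\in\mathbb{N}\}$; for $\mathcal{M}\subseteq\mathcal{P}_{\mathfrak{B}}(\mathfrak{A})$, $\mathfrak{A}^+_{\mathcal{M}}=\{x\in\mathfrak{A}:\varphi(xa,a)\ge0\ \forall\varphi\in\mathcal{M},a\in\mathfrak{B}\}$. *)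

theory Defs
  imports "HOL-Analysis.Analysis" "HOL-Library.Complex_Order"
begin

text \<open>The complex vector space structure on the carrier type 'a is given explicitly by a
  scalar multiplication sc (HOL has no class of complex vector spaces).\<close>

definition cvs :: "(complex \<Rightarrow> 'a::ab_group_add \<Rightarrow> 'a) \<Rightarrow> bool" where
  "cvs sc \<longleftrightarrow> (\<forall>x. sc 1 x = x) \<and> (\<forall>a b x. sc (a * b) x = sc a (sc b x))
     \<and> (\<forall>a b x. sc (a + b) x = sc a x + sc b x) \<and> (\<forall>a x y. sc a (x + y) = sc a x + sc a y)"

definition seminorm :: "(complex \<Rightarrow> 'a::ab_group_add \<Rightarrow> 'a) \<Rightarrow> ('a \<Rightarrow> real) \<Rightarrow> bool" where
  "seminorm sc p \<longleftrightarrow> (\<forall>x y. p (x + y) \<le> p x + p y) \<and> (\<forall>c x. p (sc c x) = cmod c * p x)"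

definition seminorm_topology :: "('a::ab_group_add \<Rightarrow> real) set \<Rightarrow> 'a topology" where
  "seminorm_topology P = topology (\<lambda>U. \<forall>x\<in>U. \<exists>F. finite F \<and> F \<subseteq> P \<and>
       (\<exists>e>0. {y. \<forall>p\<in>F. p (y - x) < e} \<subseteq> U))"

definition star_topology :: "('a \<Rightarrow> 'a) \<Rightarrow> ('a::ab_group_add \<Rightarrow> real) set \<Rightarrow> 'a topology" where
  "star_topology invol P = seminorm_topology ((\<lambda>p x. max (p x) (p (invol x))) ` P)"

definition RM :: "('a \<times> 'a) set \<Rightarrow> 'a set" where
  "RM \<Gamma> = {y. \<forall>x. (x, y) \<in> \<Gamma>}"

definition partial_star_algebra ::
  "(complex \<Rightarrow> 'a::ab_group_add \<Rightarrow> 'a) \<Rightarrow> ('a \<Rightarrow> 'a) \<Rightarrow> ('a \<times> 'a) set \<Rightarrow> ('a \<Rightarrow> 'a \<Rightarrow> 'a) \<Rightarrow> bool" where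
  "partial_star_algebra sc invol \<Gamma> mul \<longleftrightarrow>
     cvs sc
   \<and> (\<forall>x. invol (invol x) = x)
   \<and> (\<forall>a b x y. invol (sc a x + sc b y) = sc (cnj a) (invol x) + sc (cnj b) (invol y))
   \<and> (\<forall>x y. (x, y) \<in> \<Gamma> \<longleftrightarrow> (invol y, invol x) \<in> \<Gamma>)
   \<and> (\<forall>x y. (x, y) \<in> \<Gamma> \<longrightarrow> invol (mul x y) = mul (invol y) (invol x))
   \<and> (\<forall>x y z a b. (x, y) \<in> \<Gamma> \<longrightarrow> (x, z) \<in> \<Gamma> \<longrightarrow>
        (x, sc a y + sc b z) \<in> \<Gamma> \<and> mul x (sc a y + sc b z) = sc a (mul x y) + sc b (mul x z))
   \<and> (\<forall>x y z a b. (y, x) \<in> \<Gamma> \<longrightarrow> (z, x) \<in> \<Gamma> \<longrightarrow>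
        (sc a y + sc b z, x) \<in> \<Gamma> \<and> mul (sc a y + sc b z) x = sc a (mul y x) + sc b (mul z x))"

definition semi_associative :: "('a \<times> 'a) set \<Rightarrow> ('a \<Rightarrow> 'a \<Rightarrow> 'a) \<Rightarrow> bool" where
  "semi_associative \<Gamma> mul \<longleftrightarrow> (\<forall>x y z. (x, y) \<in> \<Gamma> \<longrightarrow> z \<in> RM \<Gamma> \<longrightarrow>
      (x, mul y z) \<in> \<Gamma> \<and> mul (mul x y) z = mul x (mul y z))"

text \<open>Topological partial *-algebra: the topology tau is the (Hausdorff, locally convex)
  topology generated by a separating family P of seminorms, and each multiplication
  map y in R(x) to xy is closed (closed graph).\<close>
definition top_partial_star_algebra ::
  "(complex \<Rightarrow> 'a::ab_group_add \<Rightarrow> 'a) \<Rightarrow> ('a \<Rightarrow> 'a) \<Rightarrow> ('a \<times> 'a) set \<Rightarrow> ('a \<Rightarrow> 'a \<Rightarrow> 'a)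
     \<Rightarrow> ('a \<Rightarrow> real) set \<Rightarrow> bool" where
  "top_partial_star_algebra sc invol \<Gamma> mul P \<longleftrightarrow>
     partial_star_algebra sc invol \<Gamma> mul
   \<and> (\<forall>p\<in>P. seminorm sc p)
   \<and> (\<forall>x. x \<noteq> 0 \<longrightarrow> (\<exists>p\<in>P. p x \<noteq> 0))
   \<and> (\<forall>x. closedin (prod_topology (seminorm_topology P) (seminorm_topology P))
                     {(y, mul x y) | y. (x, y) \<in> \<Gamma>})"

definition is_unit :: "('a \<times> 'a) set \<Rightarrow> ('a \<Rightarrow> 'a \<Rightarrow> 'a) \<Rightarrow> 'a \<Rightarrow> bool" where
  "is_unit \<Gamma> mul e \<longleftrightarrow> (\<forall>x. (e, x) \<in> \<Gamma> \<and> (x, e) \<in> \<Gamma> \<and> mul e x = x \<and> mul x e = x)"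

definition multiplication_core ::
  "(complex \<Rightarrow> 'a::ab_group_add \<Rightarrow> 'a) \<Rightarrow> ('a \<Rightarrow> 'a) \<Rightarrow> ('a \<times> 'a) set \<Rightarrow> ('a \<Rightarrow> 'a \<Rightarrow> 'a)
     \<Rightarrow> ('a \<Rightarrow> real) set \<Rightarrow> 'a set \<Rightarrow> bool" where
  "multiplication_core sc invol \<Gamma> mul P B \<longleftrightarrow>
     B \<subseteq> RM \<Gamma>
   \<and> 0 \<in> B \<and> (\<forall>a b x y. x \<in> B \<longrightarrow> y \<in> B \<longrightarrow> sc a x + sc b y \<in> B)
   \<and> (\<forall>e. is_unit \<Gamma> mul e \<longrightarrow> e \<in> B)
   \<and> (\<forall>a\<in>B. \<forall>b\<in>B. mul a b \<in> B)
   \<and> (star_topology invol P) closure_of B = UNIV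
   \<and> (\<forall>b\<in>B. continuous_map (seminorm_topology P) (seminorm_topology P) (\<lambda>x. mul x b))
   \<and> (\<forall>b\<in>B. \<forall>c\<in>B. \<forall>x. mul (invol b) (mul x c) = mul (mul (invol b) x) c)"

definition ips_form ::
  "(complex \<Rightarrow> 'a::ab_group_add \<Rightarrow> 'a) \<Rightarrow> ('a \<Rightarrow> 'a) \<Rightarrow> ('a \<times> 'a) set \<Rightarrow> ('a \<Rightarrow> 'a \<Rightarrow> 'a)
     \<Rightarrow> 'a set \<Rightarrow> ('a \<Rightarrow> 'a \<Rightarrow> complex) \<Rightarrow> bool" where
  "ips_form sc invol \<Gamma> mul B \<phi> \<longleftrightarrow>
     (\<forall>a b x y z. \<phi> (sc a x + sc b y) z = a * \<phi> x z + b * \<phi> y z)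
   \<and> (\<forall>a b x y z. \<phi> x (sc a y + sc b z) = cnj a * \<phi> x y + cnj b * \<phi> x z)
   \<and> (\<forall>x. 0 \<le> \<phi> x x)
   \<and> B \<subseteq> RM \<Gamma>
   \<and> (\<forall>x. \<forall>e>0. \<exists>b\<in>B. Re (\<phi> (x - b) (x - b)) < e)
   \<and> (\<forall>x. \<forall>a\<in>B. \<forall>b\<in>B. \<phi> (mul x a) b = \<phi> a (mul (invol x) b))
   \<and> (\<forall>x y. (x, y) \<in> \<Gamma> \<longrightarrow> (\<forall>a\<in>B. \<forall>b\<in>B. \<phi> (mul (invol x) a) (mul y b) = \<phi> a (mul (mul x y) b)))"

definition PB ::
  "(complex \<Rightarrow> 'a::ab_group_add \<Rightarrow> 'a) \<Rightarrow> ('a \<Rightarrow> 'a) \<Rightarrow> ('a \<times> 'a) set \<Rightarrow> ('a \<Rightarrow> 'a \<Rightarrow> 'a)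
     \<Rightarrow> ('a \<Rightarrow> real) set \<Rightarrow> 'a set \<Rightarrow> ('a \<Rightarrow> 'a \<Rightarrow> complex) set" where
  "PB sc invol \<Gamma> mul P B = {\<phi>. ips_form sc invol \<Gamma> mul B \<phi> \<and>
     (\<exists>p. seminorm sc p \<and> continuous_map (seminorm_topology P) euclideanreal p \<and>
          (\<forall>x y. cmod (\<phi> x y) \<le> p x * p y))}"

definition pos_cone :: "('a \<Rightarrow> 'a) \<Rightarrow> ('a \<Rightarrow> 'a \<Rightarrow> 'a::ab_group_add) \<Rightarrow> ('a \<Rightarrow> real) set \<Rightarrow> 'a set \<Rightarrow> 'a set" where
  "pos_cone invol mul P S = (seminorm_topology P) closure_of
     {(\<Sum>k<n. mul (invol (f k)) (f k)) | (n::nat) f. \<forall>k<n. f k \<in> S}"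

definition posB :: "('a \<Rightarrow> 'a) \<Rightarrow> ('a \<Rightarrow> 'a \<Rightarrow> 'a::ab_group_add) \<Rightarrow> ('a \<Rightarrow> real) set \<Rightarrow> 'a set \<Rightarrow> 'a set" where "posB invol mul P B = pos_cone invol mul P B"
definition pos_top :: "('a \<Rightarrow> 'a) \<Rightarrow> ('a \<times> 'a) set \<Rightarrow> ('a \<Rightarrow> 'a \<Rightarrow> 'a::ab_group_add) \<Rightarrow> ('a \<Rightarrow> real) set \<Rightarrow> 'a set" where "pos_top invol \<Gamma> mul P = pos_cone invol mul P (RM \<Gamma>)"

definition pos_M :: "('a \<Rightarrow> 'a \<Rightarrow> 'a) \<Rightarrow> 'a set \<Rightarrow> ('a \<Rightarrow> 'a \<Rightarrow> complex) set \<Rightarrow> 'a set" where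
  "pos_M mul B M = {x. \<forall>\<phi>\<in>M. \<forall>a\<in>B. 0 \<le> \<phi> (mul x a) a}"

end

theory Submission
  imports Defs
begin

text \<open>The first inclusion is monotonicity of the closure, since the core consists of universal
  right multipliers. For the second, fix \<open>\<phi>\<close> in \<open>\<P>\<^sub>\<B>(\<A>)\<close> and \<open>a \<in> \<B>\<close>. The map
  \<open>x \<mapsto> \<phi>(xa, a)\<close> is additive and \<open>\<tau>\<close>-continuous (right multiplication by \<open>a\<close> is continuous
  and \<open>\<phi>\<close> is dominated by a continuous seminorm), and on \<open>y\<^sup>*y\<close> with \<open>y \<in> R\<A>\<close> it equals
  \<open>\<phi>(ya, ya) \<ge> 0\<close>. Hence it is nonnegative on sums of such squares and, the nonnegative reals being
  closed in \<open>\<complex>\<close>, on their closure \<open>\<A>\<^sup>+\<^sub>t\<^sub>o\<^sub>p\<close>.\<close>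

lemma istopology_seminorm_neighbourhoods:
  fixes P :: "('a::ab_group_add \<Rightarrow> real) set"
  shows "istopology (\<lambda>U. \<forall>x\<in>U. \<exists>F. finite F \<and> F \<subseteq> P \<and> (\<exists>e>0. {y. \<forall>p\<in>F. p (y - x) < e} \<subseteq> U))"
  unfolding istopology_def
proof (intro conjI allI impI ballI)
  fix S T x
  assume "\<forall>x\<in>S. \<exists>F. finite F \<and> F \<subseteq> P \<and> (\<exists>e>0. {y. \<forall>p\<in>F. p (y - x) < e} \<subseteq> S)"
    and "\<forall>x\<in>T. \<exists>F. finite F \<and> F \<subseteq> P \<and> (\<exists>e>0. {y. \<forall>p\<in>F. p (y - x) < e} \<subseteq> T)"
    and "x \<in> S \<inter> T"
  then obtain F1 e1 F2 e2 where "finite F1" "F1 \<subseteq> P" "e1 > 0" "{y. \<forall>p\<in>F1. p (y - x) < e1} \<subseteq> S"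
    "finite F2" "F2 \<subseteq> P" "e2 > 0" "{y. \<forall>p\<in>F2. p (y - x) < e2} \<subseteq> T"
    by (meson IntD1 IntD2)
  then show "\<exists>F. finite F \<and> F \<subseteq> P \<and> (\<exists>e>0. {y. \<forall>p\<in>F. p (y - x) < e} \<subseteq> S \<inter> T)"
    by (intro exI[of _ "F1 \<union> F2"] conjI exI[of _ "min e1 e2"]) (auto simp: subset_iff)
next
  fix K x
  assume "\<forall>S\<in>K. \<forall>x\<in>S. \<exists>F. finite F \<and> F \<subseteq> P \<and> (\<exists>e>0. {y. \<forall>p\<in>F. p (y - x) < e} \<subseteq> S)"
    and "x \<in> \<Union>K"
  then show "\<exists>F. finite F \<and> F \<subseteq> P \<and> (\<exists>e>0. {y. \<forall>p\<in>F. p (y - x) < e} \<subseteq> \<Union>K)"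
    by (meson Union_iff Union_upper subset_trans)
qed

lemma openin_seminorm_topology:
  fixes P :: "('a::ab_group_add \<Rightarrow> real) set"
  shows "openin (seminorm_topology P) U \<longleftrightarrow>
     (\<forall>x\<in>U. \<exists>F. finite F \<and> F \<subseteq> P \<and> (\<exists>e>0. {y. \<forall>p\<in>F. p (y - x) < e} \<subseteq> U))"
  unfolding seminorm_topology_def
  by (simp add: topology_inverse'[OF istopology_seminorm_neighbourhoods])

lemma topspace_seminorm_topology [simp]: "topspace (seminorm_topology P) = UNIV"
proof -
  have "openin (seminorm_topology P) UNIV"
    unfolding openin_seminorm_topology by (intro ballI exI[of _ "{}"] conjI exI[of _ 1]) auto
  then show ?thesis
    by (simp add: openin_subset subset_antisym)
qed

lemma continuous_map_seminorm_topology_translate: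
  fixes P :: "('a::ab_group_add \<Rightarrow> real) set"
  shows "continuous_map (seminorm_topology P) (seminorm_topology P) (\<lambda>y. y - c)"
  unfolding continuous_map_def
proof (intro conjI allI impI)
  fix U
  assume U: "openin (seminorm_topology P) U"
  show "openin (seminorm_topology P) {x \<in> topspace (seminorm_topology P). x - c \<in> U}"
    unfolding openin_seminorm_topology
  proof (intro ballI)
    fix x
    assume "x \<in> {x \<in> topspace (seminorm_topology P). x - c \<in> U}"
    then have "x - c \<in> U"
      by simp
    with U obtain F e where "finite F" "F \<subseteq> P" "e > 0" and ball: "{y. \<forall>p\<in>F. p (y - (x - c)) < e} \<subseteq> U"
      unfolding openin_seminorm_topology by (meson bspec)
    moreover have "{y. \<forall>p\<in>F. p (y - x) < e} \<subseteq> {x \<in> topspace (seminorm_topology P). x - c \<in> U}"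
    proof
      fix y
      assume "y \<in> {y. \<forall>p\<in>F. p (y - x) < e}"
      moreover have "y - c - (x - c) = y - x"
        by (simp add: algebra_simps)
      ultimately show "y \<in> {x \<in> topspace (seminorm_topology P). x - c \<in> U}"
        using ball by auto
    qed
    ultimately show "\<exists>F. finite F \<and> F \<subseteq> P \<and>
        (\<exists>e>0. {y. \<forall>p\<in>F. p (y - x) < e} \<subseteq> {x \<in> topspace (seminorm_topology P). x - c \<in> U})"
      by blast
  qed
qed simp

lemma continuous_map_seminorm_topology_dominated:
  fixes P :: "('a::ab_group_add \<Rightarrow> real) set" and f :: "'a \<Rightarrow> 'b::real_normed_vector"
  assumes q: "continuous_map (seminorm_topology P) euclideanreal q" "q 0 = 0"
    and f_diff: "\<And>u v. f (u - v) = f u - f v"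
    and f_bound: "\<And>y. norm (f y) \<le> q y"
  shows "continuous_map (seminorm_topology P) euclidean f"
  unfolding continuous_map_atin limitin_canonical_iff
proof (intro ballI, rule LIM_zero_cancel)
  fix x
  have "continuous_map (seminorm_topology P) euclideanreal (q \<circ> (\<lambda>y. y - x))"
    using continuous_map_seminorm_topology_translate q(1) by (rule continuous_map_compose)
  then have "limitin euclideanreal (q \<circ> (\<lambda>y. y - x)) 0 (atin (seminorm_topology P) x)"
    by (rule limitin_continuous_map) (simp_all add: q(2))
  then have "((\<lambda>y. q (y - x)) \<longlongrightarrow> 0) (atin (seminorm_topology P) x)"
    by (simp add: o_def)
  moreover have "\<forall>\<^sub>F y in atin (seminorm_topology P) x. norm (f y - f x) \<le> q (y - x)"
    using f_bound f_diff by (intro always_eventually) metis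
  ultimately show "((\<lambda>y. f y - f x) \<longlongrightarrow> 0) (atin (seminorm_topology P) x)"
    by (rule Lim_null_comparison[rotated])
qed

lemma cvs_scale_one: "cvs sc \<Longrightarrow> sc 1 x = x"
  unfolding cvs_def by blast

lemma cvs_scale_zero:
  assumes "cvs sc"
  shows "sc 0 x = 0"
proof -
  have "sc 0 x + sc 0 x = sc 0 x + 0"
    using assms unfolding cvs_def by (metis add_0_left add_0_right)
  then show ?thesis
    by (simp only: add_left_cancel)
qed

lemma seminorm_zero:
  assumes "cvs sc" "seminorm sc p"
  shows "p 0 = 0"
proof -
  have "p (sc 0 0) = cmod 0 * p 0"
    using assms(2) unfolding seminorm_def by blast
  then show ?thesis
    by (simp add: cvs_scale_zero[OF assms(1)])
qed

lemma closed_complex_nonneg: "closed {z::complex. 0 \<le> z}"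
proof -
  have "{z::complex. 0 \<le> z} = {z. Re z \<ge> 0} \<inter> {z. Im z = 0}"
    by (auto simp: less_eq_complex_def)
  then show ?thesis
    by (simp add: closed_Int closed_halfspace_Re_ge closed_halfspace_Im_eq)
qed

lemma partial_star_algebra_mul_add_left:
  assumes "partial_star_algebra sc invol \<Gamma> mul" "a \<in> RM \<Gamma>"
  shows "mul (u + v) a = mul u a + mul v a"
proof -
  have "(u, a) \<in> \<Gamma>" "(v, a) \<in> \<Gamma>"
    using assms(2) unfolding RM_def by auto
  then have "mul (sc 1 u + sc 1 v) a = sc 1 (mul u a) + sc 1 (mul v a)"
    using assms(1) unfolding partial_star_algebra_def by blast
  moreover have "cvs sc"
    using assms(1) unfolding partial_star_algebra_def by blast
  ultimately show ?thesis
    by (simp add: cvs_scale_one)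
qed

lemma partial_star_algebra_mul_zero_left:
  assumes "partial_star_algebra sc invol \<Gamma> mul" "a \<in> RM \<Gamma>"
  shows "mul 0 a = 0"
  using partial_star_algebra_mul_add_left[OF assms, of 0 0] by simp

lemma ips_form_add_left:
  assumes "ips_form sc invol \<Gamma> mul B \<phi>" "cvs sc"
  shows "\<phi> (u + v) z = \<phi> u z + \<phi> v z"
proof -
  have "\<forall>a b x y z. \<phi> (sc a x + sc b y) z = a * \<phi> x z + b * \<phi> y z"
    using assms(1) unfolding ips_form_def by (rule conjunct1)
  then have "\<phi> (sc 1 u + sc 1 v) z = 1 * \<phi> u z + 1 * \<phi> v z"
    by blast
  then show ?thesis
    by (simp add: cvs_scale_one[OF assms(2)])
qed

lemma ips_form_diff_left:
  assumes "ips_form sc invol \<Gamma> mul B \<phi>" "cvs sc"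
  shows "\<phi> (u - v) z = \<phi> u z - \<phi> v z"
  using ips_form_add_left[OF assms, of "u - v" v z] by simp

lemma ips_form_nonneg_square:
  assumes psa: "partial_star_algebra sc invol \<Gamma> mul" and \<phi>: "ips_form sc invol \<Gamma> mul B \<phi>"
    and y: "y \<in> RM \<Gamma>" and a: "a \<in> B"
  shows "0 \<le> \<phi> (mul (mul (invol y) y) a) a"
proof -
  have \<Gamma>: "(invol y, y) \<in> \<Gamma>"
    using y unfolding RM_def by blast
  have invol_invol: "\<And>x. invol (invol x) = x"
    and invol_mul: "\<And>x y. (x, y) \<in> \<Gamma> \<Longrightarrow> invol (mul x y) = mul (invol y) (invol x)"
    using psa unfolding partial_star_algebra_def by blast+
  have adjoint: "\<And>x a b. a \<in> B \<Longrightarrow> b \<in> B \<Longrightarrow> \<phi> (mul x a) b = \<phi> a (mul (invol x) b)"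
    and adjoint_mul: "\<And>x y a b. (x, y) \<in> \<Gamma> \<Longrightarrow> a \<in> B \<Longrightarrow> b \<in> B \<Longrightarrow>
        \<phi> (mul (invol x) a) (mul y b) = \<phi> a (mul (mul x y) b)"
    and positive: "\<And>x. 0 \<le> \<phi> x x"
    using \<phi> unfolding ips_form_def by blast+
  have "\<phi> (mul (mul (invol y) y) a) a = \<phi> a (mul (mul (invol y) y) a)"
    using adjoint[OF a a] invol_mul[OF \<Gamma>] invol_invol by simp
  also have "\<dots> = \<phi> (mul y a) (mul y a)"
    using adjoint_mul[OF \<Gamma> a a] invol_invol by simp
  finally show ?thesis
    using positive by simp
qed

definition sums_of_squares :: "('a \<Rightarrow> 'a) \<Rightarrow> ('a \<Rightarrow> 'a \<Rightarrow> 'a::ab_group_add) \<Rightarrow> 'a set \<Rightarrow> 'a set" where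
  "sums_of_squares invol mul S = {(\<Sum>k<n. mul (invol (f k)) (f k)) | (n::nat) f. \<forall>k<n. f k \<in> S}"

lemma pos_cone_eq_closure_of:
  "pos_cone invol mul P S = seminorm_topology P closure_of sums_of_squares invol mul S"
  by (simp add: pos_cone_def sums_of_squares_def)

lemma pos_cone_mono: "S \<subseteq> T \<Longrightarrow> pos_cone invol mul P S \<subseteq> pos_cone invol mul P T"
  unfolding pos_cone_eq_closure_of sums_of_squares_def
  by (rule closure_of_mono) blast

lemma ips_form_nonneg_sums_of_squares:
  assumes psa: "partial_star_algebra sc invol \<Gamma> mul" and \<phi>: "ips_form sc invol \<Gamma> mul B \<phi>"
    and a: "a \<in> B" and x: "x \<in> sums_of_squares invol mul (RM \<Gamma>)"
  shows "0 \<le> \<phi> (mul x a) a"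
proof -
  have cvs: "cvs sc"
    using psa unfolding partial_star_algebra_def by blast
  have aR: "a \<in> RM \<Gamma>"
    using \<phi> a unfolding ips_form_def by blast
  obtain n :: nat and f where x_eq: "x = (\<Sum>k<n. mul (invol (f k)) (f k))" and f: "\<forall>k<n. f k \<in> RM \<Gamma>"
    using x unfolding sums_of_squares_def by blast
  have "0 \<le> \<phi> (mul (\<Sum>k<m. mul (invol (f k)) (f k)) a) a" if "m \<le> n" for m
    using that
  proof (induction m)
    case 0
    show ?case
      using ips_form_diff_left[OF \<phi> cvs, of 0 0]
      by (simp add: partial_star_algebra_mul_zero_left[OF psa aR])
  next
    case (Suc m)
    then show ?case
      using ips_form_nonneg_square[OF psa \<phi> _ a, of "f m"] f
      by (simp add: partial_star_algebra_mul_add_left[OF psa aR] ips_form_add_left[OF \<phi> cvs])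
  qed
  then show ?thesis
    using x_eq by simp
qed

lemma PB_continuous_map_left:
  assumes "\<phi> \<in> PB sc invol \<Gamma> mul P B" "cvs sc"
  shows "continuous_map (seminorm_topology P) euclidean (\<lambda>y. \<phi> y b)"
proof -
  obtain p where \<phi>: "ips_form sc invol \<Gamma> mul B \<phi>" and p: "seminorm sc p"
    "continuous_map (seminorm_topology P) euclideanreal p" and bound: "\<And>x y. cmod (\<phi> x y) \<le> p x * p y"
    using assms(1) unfolding PB_def by blast
  show ?thesis
  proof (rule continuous_map_seminorm_topology_dominated)
    show "continuous_map (seminorm_topology P) euclideanreal (\<lambda>y. p y * p b)"
      using p(2) by (rule continuous_map_real_mult_right)
  qed (use bound seminorm_zero[OF assms(2) p(1)] ips_form_diff_left[OF \<phi> assms(2)] in auto)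
qed

lemma pos_top_subset_pos_M:
  assumes psa: "partial_star_algebra sc invol \<Gamma> mul"
    and mul_continuous: "\<forall>b\<in>B. continuous_map (seminorm_topology P) (seminorm_topology P) (\<lambda>x. mul x b)"
    and M: "M \<subseteq> PB sc invol \<Gamma> mul P B"
  shows "pos_top invol \<Gamma> mul P \<subseteq> pos_M mul B M"
  unfolding pos_M_def
proof (intro subsetI CollectI ballI)
  fix x \<phi> a
  assume x: "x \<in> pos_top invol \<Gamma> mul P" and "\<phi> \<in> M" and a: "a \<in> B"
  then have \<phi>: "\<phi> \<in> PB sc invol \<Gamma> mul P B"
    using M by blast
  have cvs: "cvs sc"
    using psa unfolding partial_star_algebra_def by blast
  have "continuous_map (seminorm_topology P) euclidean ((\<lambda>y. \<phi> y a) \<circ> (\<lambda>y. mul y a))"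
    using mul_continuous a PB_continuous_map_left[OF \<phi> cvs] by (blast intro: continuous_map_compose)
  from closedin_continuous_map_preimage[OF this closed_complex_nonneg[unfolded closed_closedin]]
  have "closedin (seminorm_topology P) {y. 0 \<le> \<phi> (mul y a) a}"
    by (simp add: o_def)
  moreover have "sums_of_squares invol mul (RM \<Gamma>) \<subseteq> {y. 0 \<le> \<phi> (mul y a) a}"
    using ips_form_nonneg_sums_of_squares[OF psa _ a] \<phi> unfolding PB_def by blast
  ultimately have "pos_top invol \<Gamma> mul P \<subseteq> {y. 0 \<le> \<phi> (mul y a) a}"
    unfolding pos_top_def pos_cone_eq_closure_of by (rule closure_of_minimal[rotated])
  then show "0 \<le> \<phi> (mul x a) a"
    using x by blast
qed

theorem proposition5p7:
  fixes sc :: "complex \<Rightarrow> 'a::ab_group_add \<Rightarrow> 'a"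
    and invol :: "'a \<Rightarrow> 'a" and \<Gamma> :: "('a \<times> 'a) set" and mul :: "'a \<Rightarrow> 'a \<Rightarrow> 'a"
    and P :: "('a \<Rightarrow> real) set" and B :: "'a set"
  assumes "top_partial_star_algebra sc invol \<Gamma> mul P"
    and "semi_associative \<Gamma> mul"
    and "multiplication_core sc invol \<Gamma> mul P B"
  shows "posB invol mul P B \<subseteq> pos_top invol \<Gamma> mul P \<and>
         (\<forall>M. M \<subseteq> PB sc invol \<Gamma> mul P B \<longrightarrow> pos_top invol \<Gamma> mul P \<subseteq> pos_M mul B M)"
proof -
  have psa: "partial_star_algebra sc invol \<Gamma> mul"
    using assms(1) unfolding top_partial_star_algebra_def by blast
  have core: "B \<subseteq> RM \<Gamma>"
    and mul_continuous: "\<forall>b\<in>B. continuous_map (seminorm_topology P) (seminorm_topology P) (\<lambda>x. mul x b)"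
    using assms(3) unfolding multiplication_core_def by blast+
  have "posB invol mul P B \<subseteq> pos_top invol \<Gamma> mul P"
    using core unfolding posB_def pos_top_def by (rule pos_cone_mono)
  moreover have "\<forall>M. M \<subseteq> PB sc invol \<Gamma> mul P B \<longrightarrow> pos_top invol \<Gamma> mul P \<subseteq> pos_M mul B M"
    using pos_top_subset_pos_M[OF psa mul_continuous] by blast
  ultimately show ?thesis ..
qed

end
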